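(* The BBC algebra $\mathfrak{B}=(\Lambda,\Pi,\perp\!\!\!\perp)$ is a coherent realizability algebra. Concretely: for every stack $\pi$ and all $\xi\in\Lambda$, $\varpi\in\Pi$ one has $k_\pi\star\xi\cdot\varpi\succ\xi\star\pi$; and for every closed term $\theta$ (no occurrence of $p,q_0,\dots,q_N$) one has $\theta\star\pi_0\notin\perp\!\!\!\perp$.
   Context: Fix an integer $N\ge 0$. The set $\Lambda$ of terms is the smallest set containing the constants $B,C,I,K,W$ (Curry's combinators), $cc$ (Felleisen–Griffin instruction), $A$ (abort) and the "variables" $p,q_0,\dots,q_N$, closed under application $(\xi)\eta$ (also written $\xi\eta$; $(\dots((\xi_1)\xi_2)\dots)\xi_n$ is written $\xi_1\xi_2\dots\xi_n$), and such that to each sequence $(\xi_i)_{i\in\mathbb N}$ of closed terms (terms with no occurrence of $p,q_0,\dots,q_N$) is associated, injectively and in a well-founded way, a new constant $\bigwedge_i\xi_i$. A stack is a finite sequence $t_0\cdot\ldots\cdot t_{n-1}\cdot\pi_0$ of terms terminated by the symbol $\pi_0$ (the empty stack); $\Pi$ is the set of stacks. Processes are pairs $\xi\star\pi\in\Lambda\times\Pi$. For $t\in\Lambda$ let $\ell_t=((C)(B)CB)t$, and define the continuation $k_\pi$ by $k_{\pi_0}=A$, $k_{t\cdot\pi}=(\ell_t)k_\pi$. Let $\sigma=(BW)(C)(B)BB$, $\underline 0=(K)I$, $\underline{n+1}=(\sigma)\underline n$. Execution $\succ$ is the least preorder on $\Lambda\times\Pi$ such that for all $\xi,\eta,\zeta\in\Lambda,\pi\in\Pi,n\in\mathbb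 N$: $(\xi)\eta\star\pi\succ\xi\star\eta\cdot\pi$; $B\star\xi\cdot\eta\cdot\zeta\cdot\pi\succ\xi\star(\eta)\zeta\cdot\pi$; $C\star\xi\cdot\eta\cdot\zeta\cdot\pi\succ\xi\star\zeta\cdot\eta\cdot\pi$; $I\star\xi\cdot\pi\succ\xi\star\pi$; $K\star\xi\cdot\eta\cdot\pi\succ\xi\star\pi$; $W\star\xi\cdot\eta\cdot\pi\succ\xi\star\eta\cdot\eta\cdot\pi$; $cc\star\xi\cdot\pi\succ\xi\star k_\pi\cdot\pi$; $A\star\xi\cdot\pi\succ\xi\star\pi_0$; $\bigwedge_i\xi_i\star\underline n\cdot\pi\succ\xi_n\star\pi$. The pole is $\perp\!\!\!\perp=\{\xi\star\pi:\exists\varpi\in\Pi,\ \xi\star\pi\succ p\star\varpi\}$. The proof-like terms of this algebra are taken to be closed terms. A realizability algebra (in Krivine's sense) requires in particular that continuations satisfy $k_\pi\star\xi\cdot\varpi\succ\xi\star\pi$; it is coherent if for every proof-like term $\theta$ there is a stack $\pi$ with $\theta\star\pi\notin\perp\!\!\!\perp$. *)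

theory Defs
  imports Main
begin

text \<open>The constructor Big f stands for the infinitary
constant \<open>\<And>\<close>_i (f i); it is only admitted in \<Lambda> when all f i are closed
(see bbc_wf).\<close>

datatype bterm =
    CB | CC | CI | CK | CW
  | Ccc
  | CA
  | Vp
  | Vq nat
  | App bterm bterm
  | Big "nat \<Rightarrow> bterm"

text \<open>Stacks: finite lists of terms; the empty list is \<pi>_0.\<close>
type_synonym bstack = "bterm list"

primrec closed :: "bterm \<Rightarrow> bool" where
  "closed CB = True"
| "closed CC = True"
| "closed CI = True"
| "closed CK = True"
| "closed CW = True"
| "closed Ccc = True"
| "closed CA = True"
| "closed Vp = False"
| "closed (Vq n) = False"
| "closed (App s t) = (closed s \<and> closed t)"
| "closed (Big f) = (\<forall>i. closed (f i))"

text \<open>Membership in \<Lambda> (for the fixed N): variables p, q_0..q_N only, and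
Big f only for sequences of closed terms.\<close>
primrec bbc_wf :: "nat \<Rightarrow> bterm \<Rightarrow> bool" where
  "bbc_wf N CB = True"
| "bbc_wf N CC = True"
| "bbc_wf N CI = True"
| "bbc_wf N CK = True"
| "bbc_wf N CW = True"
| "bbc_wf N Ccc = True"
| "bbc_wf N CA = True"
| "bbc_wf N Vp = True"
| "bbc_wf N (Vq n) = (n \<le> N)"
| "bbc_wf N (App s t) = (bbc_wf N s \<and> bbc_wf N t)"
| "bbc_wf N (Big f) = (\<forall>i. bbc_wf N (f i) \<and> closed (f i))"

definition bbc_wf_stack :: "nat \<Rightarrow> bstack \<Rightarrow> bool" where
  "bbc_wf_stack N \<pi> = (\<forall>t\<in>set \<pi>. bbc_wf N t)"

definition ell :: "bterm \<Rightarrow> bterm" where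
  "ell t = App (App CC (App (App CB CC) CB)) t"

primrec kont :: "bstack \<Rightarrow> bterm" where
  "kont [] = CA"
| "kont (t # \<pi>) = App (ell t) (kont \<pi>)"

definition sigma :: bterm where
  "sigma = App (App CB CW) (App CC (App (App CB CB) CB))"

primrec numeral_term :: "nat \<Rightarrow> bterm" where
  "numeral_term 0 = App CK CI"
| "numeral_term (Suc n) = App sigma (numeral_term n)"

inductive step :: "bterm \<times> bstack \<Rightarrow> bterm \<times> bstack \<Rightarrow> bool" where
  push: "step (App x y, \<pi>) (x, y # \<pi>)"
| bB: "step (CB, x # y # z # \<pi>) (x, App y z # \<pi>)"
| bC: "step (CC, x # y # z # \<pi>) (x, z # y # \<pi>)"
| bI: "step (CI, x # \<pi>) (x, \<pi>)"
| bK: "step (CK, x # y # \<pi>) (x, \<pi>)"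
| bW: "step (CW, x # y # \<pi>) (x, y # y # \<pi>)"
| bcc: "step (Ccc, x # \<pi>) (x, kont \<pi> # \<pi>)"
| bA: "step (CA, x # \<pi>) (x, [])"
| bBig: "step (Big f, numeral_term n # \<pi>) (f n, \<pi>)"

definition exec :: "bterm \<times> bstack \<Rightarrow> bterm \<times> bstack \<Rightarrow> bool" where
  "exec = step\<^sup>*\<^sup>*"

definition pole :: "(bterm \<times> bstack) set" where
  "pole = {(\<xi>, \<pi>). \<exists>\<rho>. exec (\<xi>, \<pi>) (Vp, \<rho>)}"

end

theory Submission
  imports Defs
begin

text \<open>The continuation clause is a direct computation: \<open>\<ell>\<^sub>t\<close> moves the next stack element
  \<open>t\<close> onto the argument \<open>\<xi>\<close>, so \<open>k\<^sub>\<pi>\<close> rebuilds \<open>\<pi>\<close> one element at a time. Coherence holds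
  because execution never creates the variable \<open>p\<close>: every rule only rearranges the terms
  of the process or inserts closed continuations, so a closed process never reaches \<open>p\<close>.\<close>

lemma exec_trans [trans]: "exec s s' \<Longrightarrow> exec s' s'' \<Longrightarrow> exec s s''"
  unfolding exec_def by (rule rtranclp_trans)

lemma exec_ell: "exec (App (ell t) k, \<xi> # \<rho>) (k, App \<xi> t # \<rho>)"
  unfolding exec_def ell_def
  by (rule converse_rtranclp_into_rtranclp, (rule step.intros)+,
      (rule converse_rtranclp_into_rtranclp, rule step.intros)+, rule rtranclp.rtrancl_refl)

lemma exec_kont: "exec (kont \<pi>, \<xi> # \<rho>) (\<xi>, \<pi>)"
proof (induction \<pi> arbitrary: \<xi> \<rho>)
  case Nil
  show ?case unfolding exec_def by (auto intro: step.intros)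
next
  case (Cons t \<pi>)
  have "exec (kont (t # \<pi>), \<xi> # \<rho>) (kont \<pi>, App \<xi> t # \<rho>)"
    by (simp add: exec_ell)
  also have "exec \<dots> (App \<xi> t, \<pi>)"
    by (rule Cons.IH)
  also have "exec \<dots> (\<xi>, t # \<pi>)"
    unfolding exec_def by (auto intro: step.intros)
  finally show ?case .
qed

definition closed_process :: "bterm \<times> bstack \<Rightarrow> bool" where
  "closed_process s \<longleftrightarrow> closed (fst s) \<and> (\<forall>t\<in>set (snd s). closed t)"

lemma closed_kont: "\<forall>t\<in>set \<pi>. closed t \<Longrightarrow> closed (kont \<pi>)"
  by (induction \<pi>) (auto simp: ell_def)

lemma step_closed_process: "step s s' \<Longrightarrow> closed_process s \<Longrightarrow> closed_process s'"
  by (induction rule: step.induct) (auto simp: closed_process_def closed_kont)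

lemma exec_closed_process: "exec s s' \<Longrightarrow> closed_process s \<Longrightarrow> closed_process s'"
  unfolding exec_def by (induction rule: rtranclp_induct) (auto intro: step_closed_process)

lemma closed_process_notin_pole: "closed_process s \<Longrightarrow> s \<notin> pole"
  by (auto simp: pole_def closed_process_def dest: exec_closed_process)

theorem lemma1:
  fixes N :: nat
  shows "(\<forall>\<pi> \<xi> \<rho>. bbc_wf_stack N \<pi> \<and> bbc_wf N \<xi> \<and> bbc_wf_stack N \<rho> \<longrightarrow>
            exec (kont \<pi>, \<xi> # \<rho>) (\<xi>, \<pi>))
       \<and> (\<forall>\<theta>. bbc_wf N \<theta> \<and> closed \<theta> \<longrightarrow> (\<theta>, []) \<notin> pole)"
  by (simp add: exec_kont closed_process_notin_pole closed_process_def)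

end
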